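(* (Setting as in the context.) Let $\bar u\in\mathcal U$, $\bar y\in\mathcal Y$, $\bar v\in\mathcal V$, $\bar z\in\mathcal Z$, $\bar x\in\mathcal X$ be given and $\bar\gamma:=-\Gamma(\bar u,\bar y,\bar v,\bar z)$. Define, with $\mathcal A_0:=\mathcal F$, $$\bar\beta_{p,j}:=\mathcal A_{j-1}\mathcal A_p^*\mathcal E_{\theta_p}^{-1}(b_p-\mathcal A_p\bar x-\mathcal P_p\bar y_p+\sigma\mathcal A_p\bar\gamma),\quad j=1,\dots,p,$$ and for $i=p-1,\dots,1$, $$\bar\beta_{i,j}:=\mathcal A_{j-1}\mathcal A_i^*\mathcal E_{\theta_i}^{-1}\Big(b_i-\sum_{k=i+1}^p\bar\beta_{k,i+1}-\mathcal A_i\bar x-\mathcal P_i\bar y_i+\sigma\mathcal A_i\bar\gamma\Big),\quad j=1,\dots,i,$$ and $\bar\delta_\theta:=\sum_{i=1}^p\bar\beta_{i,1}\in\mathcal U$. For $i=p,p-1,\dots,1$ define (with $y'_{\ge p+1}$ empty) $$y'_i:=\operatorname{argmin}_{y_i}\ \mathcal L_\sigma(\bar u,(\bar y_{\le i-1},y_i,y'_{\ge i+1}),\bar v,\bar z;\bar x)+\tfrac\sigma2\|y_i-\bar y_i\|^2_{\mathcal T_{\theta_i}}.$$ Let $$(u^+,y^+):=\operatorname{argmin}_{u,y}\ \mathcal L_\sigma(u,y,\bar v,\bar z;\bar x)+\tfrac\sigma2\|(u,y_{\le p-1})-(\bar u,\bar y_{\le p-1})\|^2_{\widehat{\mathcal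 T}_{f_p}}+\tfrac\sigma2\|y_p-\bar y_p\|^2_{\mathcal T_{\theta_p}}.$$ Then $(u^+,y^+)$ is obtained exactly by $$u^+=\operatorname{argmin}_u\ \mathcal L_\sigma(u,\bar y,\bar v,\bar z;\bar x)+\langle\bar\delta_\theta,u\rangle+\tfrac\sigma2\|u-\bar u\|^2_{\mathcal T_f},$$ $$y_i^+=\operatorname{argmin}_{y_i}\ \mathcal L_\sigma(u^+,(y^+_{\le i-1},y_i,y'_{\ge i+1}),\bar v,\bar z;\bar x)+\tfrac\sigma2\|y_i-\bar y_i\|^2_{\mathcal T_{\theta_i}},\quad i=1,\dots,p,$$ and also, equivalently, by $$u^+=\operatorname{argmin}_u\ \mathcal L_\sigma(u,y',\bar v,\bar z;\bar x)+\tfrac\sigma2\|u-\bar u\|^2_{\mathcal T_f},$$ $$y_i^+=\operatorname{argmin}_{y_i}\ \mathcal L_\sigma(u^+,(y^+_{\le i-1},y_i,y'_{\ge i+1}),\bar v,\bar z;\bar x)+\tfrac\sigma2\|y_i-\bar y_i\|^2_{\mathcal T_{\theta_i}},\quad i=1,\dots,p.$$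
   Context: Let $p,q\ge1$ be integers and $\mathcal U,\mathcal V,\mathcal X,\mathcal Y_1,\dots,\mathcal Y_p,\mathcal Z_1,\dots,\mathcal Z_q$ real finite-dimensional Euclidean spaces, $\mathcal Y=\mathcal Y_1\times\dots\times\mathcal Y_p$, $\mathcal Z=\mathcal Z_1\times\dots\times\mathcal Z_q$. Let $f:\mathcal U\to(-\infty,+\infty]$, $g:\mathcal V\to(-\infty,+\infty]$ be closed proper convex; $\mathcal F:\mathcal X\to\mathcal U$, $\mathcal G:\mathcal X\to\mathcal V$, $\mathcal A_i:\mathcal X\to\mathcal Y_i$, $\mathcal B_j:\mathcal X\to\mathcal Z_j$ linear; $c\in\mathcal X$; $\theta_i(y_i)=\frac12\langle y_i,\mathcal P_iy_i\rangle-\langle b_i,y_i\rangle$, $\varphi_j(z_j)=\frac12\langle z_j,\mathcal Q_jz_j\rangle-\langle d_j,z_j\rangle$ with $\mathcal P_i,\mathcal Q_j$ self-adjoint positive semidefinite. Write $\mathcal A^*y=\sum_i\mathcal A_i^*y_i$, $\mathcal B^*z=\sum_j\mathcal B_j^*z_j$, $\Gamma(u,y,v,z):=\mathcal F^*u+\mathcal A^*y+\mathcal G^*v+\mathcal B^*z-c$, and for $\sigma>0$ $$\mathcal L_\sigma(u,y,v,z;x):=f(u)+\sum_i\theta_i(y_i)+g(v)+\sum_j\varphi_j(z_j)+\langle x,\Gamma(u,y,v,z)\rangle+\tfrac\sigma2\|\Gamma(u,y,v,z)\|^2.$$ For each $i$, $\mathcal E_{\theta_i}$ is a self-adjoint positive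 definite operator on $\mathcal Y_i$ with $\mathcal E_{\theta_i}\succeq\sigma^{-1}\mathcal P_i+\mathcal A_i\mathcal A_i^*$ and $\mathcal T_{\theta_i}:=\mathcal E_{\theta_i}-\sigma^{-1}\mathcal P_i-\mathcal A_i\mathcal A_i^*$. $\mathcal T_f$ is a self-adjoint positive semidefinite operator on $\mathcal U$. Notation: $y_{\le i}=(y_1,\dots,y_i)$, $y_{\ge i}=(y_i,\dots,y_p)$ (empty if out of range); $\|w\|^2_{\mathcal T}=\langle w,\mathcal Tw\rangle$. Let $\mathcal F_1:=\mathcal F$ and, for $i=1,\dots,p$, $\mathcal F_{i+1}:\mathcal X\to\mathcal U\times\mathcal Y_1\times\dots\times\mathcal Y_i$, $\mathcal F_{i+1}x=(\mathcal Fx,\mathcal A_1x,\dots,\mathcal A_ix)$. Define $\widehat{\mathcal T}_{f_1}:=\mathcal T_f+\mathcal F_1\mathcal A_1^*\mathcal E_{\theta_1}^{-1}\mathcal A_1\mathcal F_1^*$ and for $i=2,\dots,p$, $\widehat{\mathcal T}_{f_i}:=\mathrm{diag}(\widehat{\mathcal T}_{f_{i-1}},\mathcal T_{\theta_{i-1}})+\mathcal F_i\mathcal A_i^*\mathcal E_{\theta_i}^{-1}\mathcal A_i\mathcal F_i^*$ (an operator on $\mathcal U\times\mathcal Y_1\times\dots\times\mathcal Y_{i-1}$). *)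

theory Defs
  imports "HOL-Analysis.Analysis" "HOL-Library.FuncSet"
begin

text \<open>
  Each block space Y_i (i = 1..p)
  is modelled as a linear subspace  pd_SY D i  of a common Euclidean type 'y (with the
  inherited inner product), and likewise Z_j = pd_SZ D j, a subspace of a Euclidean
  type 'z.  An element y of Y = Y_1 x ... x Y_p is a family ys in PiE {1..p} (pd_SY D).
  Operators on Y_i are maps 'y => 'y that are linear and map Y_i into Y_i; their
  properties (self-adjointness, (semi)definiteness) are required on Y_i.
  A_i^* is the adjoint of A_i : X -> Y_i (restricted to Y_i).
\<close>

record ('u, 'v, 'x, 'y, 'z) prob_data =
  pd_sigma :: real
  pd_f :: "'u \<Rightarrow> ereal"
  pd_g :: "'v \<Rightarrow> ereal"
  pd_F :: "'x \<Rightarrow> 'u"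
  pd_G :: "'x \<Rightarrow> 'v"
  pd_p :: nat
  pd_q :: nat
  pd_SY :: "nat \<Rightarrow> 'y set"
  pd_SZ :: "nat \<Rightarrow> 'z set"
  pd_A :: "nat \<Rightarrow> 'x \<Rightarrow> 'y"
  pd_B :: "nat \<Rightarrow> 'x \<Rightarrow> 'z"
  pd_c :: 'x
  pd_P :: "nat \<Rightarrow> 'y \<Rightarrow> 'y"
  pd_b :: "nat \<Rightarrow> 'y"
  pd_Q :: "nat \<Rightarrow> 'z \<Rightarrow> 'z"
  pd_d :: "nat \<Rightarrow> 'z"
  pd_E :: "nat \<Rightarrow> 'y \<Rightarrow> 'y"
  pd_Tf :: "'u \<Rightarrow> 'u"

definition proper_fun :: "('a \<Rightarrow> ereal) \<Rightarrow> bool" where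
  "proper_fun h \<longleftrightarrow> (\<forall>x. h x \<noteq> -\<infinity>) \<and> (\<exists>x. h x \<noteq> \<infinity>)"

definition convex_fun :: "('a::real_vector \<Rightarrow> ereal) \<Rightarrow> bool" where
  "convex_fun h \<longleftrightarrow> (\<forall>x y. \<forall>t::real. 0 < t \<and> t < 1 \<longrightarrow>
      h ((1 - t) *\<^sub>R x + t *\<^sub>R y) \<le> ereal (1 - t) * h x + ereal t * h y)"

definition closed_fun :: "('a::topological_space \<Rightarrow> ereal) \<Rightarrow> bool" where
  "closed_fun h \<longleftrightarrow> closed {(x, t::real). h x \<le> ereal t}"

definition closed_proper_convex :: "('a::euclidean_space \<Rightarrow> ereal) \<Rightarrow> bool" where
  "closed_proper_convex h \<longleftrightarrow> closed_fun h \<and> proper_fun h \<and> convex_fun h"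

definition op_on :: "'a::euclidean_space set \<Rightarrow> ('a \<Rightarrow> 'a) \<Rightarrow> bool" where
  "op_on S T \<longleftrightarrow> linear T \<and> (\<forall>y\<in>S. T y \<in> S)"

definition selfadj_on :: "'a::euclidean_space set \<Rightarrow> ('a \<Rightarrow> 'a) \<Rightarrow> bool" where
  "selfadj_on S T \<longleftrightarrow> (\<forall>a\<in>S. \<forall>b\<in>S. a \<bullet> T b = T a \<bullet> b)"

definition psd_on :: "'a::euclidean_space set \<Rightarrow> ('a \<Rightarrow> 'a) \<Rightarrow> bool" where
  "psd_on S T \<longleftrightarrow> (\<forall>a\<in>S. 0 \<le> a \<bullet> T a)"

definition pd_on :: "'a::euclidean_space set \<Rightarrow> ('a \<Rightarrow> 'a) \<Rightarrow> bool" where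
  "pd_on S T \<longleftrightarrow> (\<forall>a\<in>S. a \<noteq> 0 \<longrightarrow> 0 < a \<bullet> T a)"

definition inv_on :: "'a::euclidean_space set \<Rightarrow> ('a \<Rightarrow> 'a) \<Rightarrow> 'a \<Rightarrow> 'a" where
  "inv_on S T w = (THE v. v \<in> S \<and> T v = w)"

definition sqn :: "('a::real_inner \<Rightarrow> 'a) \<Rightarrow> 'a \<Rightarrow> real" where
  "sqn T w = w \<bullet> T w"

definition wf_data :: "('u::euclidean_space, 'v::euclidean_space, 'x::euclidean_space,
      'y::euclidean_space, 'z::euclidean_space) prob_data \<Rightarrow> bool" where
  "wf_data D \<longleftrightarrow>
     1 \<le> pd_p D \<and> 1 \<le> pd_q D \<and> 0 < pd_sigma D \<and>
     closed_proper_convex (pd_f D) \<and> closed_proper_convex (pd_g D) \<and>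
     linear (pd_F D) \<and> linear (pd_G D) \<and>
     (\<forall>i\<in>{1..pd_p D}.
        subspace (pd_SY D i) \<and> linear (pd_A D i) \<and> (\<forall>x. pd_A D i x \<in> pd_SY D i) \<and>
        op_on (pd_SY D i) (pd_P D i) \<and> selfadj_on (pd_SY D i) (pd_P D i) \<and>
        psd_on (pd_SY D i) (pd_P D i) \<and> pd_b D i \<in> pd_SY D i \<and>
        op_on (pd_SY D i) (pd_E D i) \<and> selfadj_on (pd_SY D i) (pd_E D i) \<and>
        pd_on (pd_SY D i) (pd_E D i) \<and>
        (\<forall>y\<in>pd_SY D i. y \<bullet> pd_E D i y \<ge>
            (y \<bullet> pd_P D i y) / pd_sigma D + y \<bullet> pd_A D i (adjoint (pd_A D i) y))) \<and>
     (\<forall>j\<in>{1..pd_q D}.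
        subspace (pd_SZ D j) \<and> linear (pd_B D j) \<and> (\<forall>x. pd_B D j x \<in> pd_SZ D j) \<and>
        op_on (pd_SZ D j) (pd_Q D j) \<and> selfadj_on (pd_SZ D j) (pd_Q D j) \<and>
        psd_on (pd_SZ D j) (pd_Q D j) \<and> pd_d D j \<in> pd_SZ D j) \<and>
     linear (pd_Tf D) \<and> (\<forall>a b. a \<bullet> pd_Tf D b = pd_Tf D a \<bullet> b) \<and>
     (\<forall>a. 0 \<le> a \<bullet> pd_Tf D a)"

definition theta :: "('u, 'v, 'x, 'y::real_inner, 'z) prob_data \<Rightarrow> nat \<Rightarrow> 'y \<Rightarrow> real" where
  "theta D i y = (1/2) * (y \<bullet> pd_P D i y) - pd_b D i \<bullet> y"

definition phi :: "('u, 'v, 'x, 'y, 'z::real_inner) prob_data \<Rightarrow> nat \<Rightarrow> 'z \<Rightarrow> real" where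
  "phi D j z = (1/2) * (z \<bullet> pd_Q D j z) - pd_d D j \<bullet> z"

definition Gam :: "('u::euclidean_space, 'v::euclidean_space, 'x::euclidean_space,
      'y::euclidean_space, 'z::euclidean_space) prob_data
     \<Rightarrow> 'u \<Rightarrow> (nat \<Rightarrow> 'y) \<Rightarrow> 'v \<Rightarrow> (nat \<Rightarrow> 'z) \<Rightarrow> 'x" where
  "Gam D u ys v zs = adjoint (pd_F D) u + (\<Sum>i\<in>{1..pd_p D}. adjoint (pd_A D i) (ys i))
      + adjoint (pd_G D) v + (\<Sum>j\<in>{1..pd_q D}. adjoint (pd_B D j) (zs j)) - pd_c D"

definition Lsig :: "('u::euclidean_space, 'v::euclidean_space, 'x::euclidean_space,
      'y::euclidean_space, 'z::euclidean_space) prob_data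
     \<Rightarrow> 'u \<Rightarrow> (nat \<Rightarrow> 'y) \<Rightarrow> 'v \<Rightarrow> (nat \<Rightarrow> 'z) \<Rightarrow> 'x \<Rightarrow> ereal" where
  "Lsig D u ys v zs x = pd_f D u + pd_g D v +
     ereal ((\<Sum>i\<in>{1..pd_p D}. theta D i (ys i)) + (\<Sum>j\<in>{1..pd_q D}. phi D j (zs j))
        + x \<bullet> Gam D u ys v zs + (pd_sigma D / 2) * (norm (Gam D u ys v zs))\<^sup>2)"

definition Einv :: "('u, 'v, 'x, 'y::euclidean_space, 'z) prob_data \<Rightarrow> nat \<Rightarrow> 'y \<Rightarrow> 'y" where
  "Einv D i = inv_on (pd_SY D i) (pd_E D i)"

definition Ttheta :: "('u, 'v, 'x::euclidean_space, 'y::euclidean_space, 'z) prob_data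
     \<Rightarrow> nat \<Rightarrow> 'y \<Rightarrow> 'y" where
  "Ttheta D i y = pd_E D i y - (1 / pd_sigma D) *\<^sub>R pd_P D i y
      - pd_A D i (adjoint (pd_A D i) y)"

text \<open>Elements of U x Y_1 x ... x Y_(j-1) are pairs (u, ys) where only ys 1, ..., ys (j-1) matter.\<close>

definition Fcal :: "('u::euclidean_space, 'v, 'x::euclidean_space, 'y::euclidean_space, 'z) prob_data
     \<Rightarrow> nat \<Rightarrow> 'x \<Rightarrow> 'u \<times> (nat \<Rightarrow> 'y)" where
  "Fcal D j x = (pd_F D x, (\<lambda>k. if k \<in> {1..<j} then pd_A D k x else 0))"

definition Fcal_adj :: "('u::euclidean_space, 'v, 'x::euclidean_space, 'y::euclidean_space, 'z) prob_data
     \<Rightarrow> nat \<Rightarrow> 'u \<times> (nat \<Rightarrow> 'y) \<Rightarrow> 'x" where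
  "Fcal_adj D j w = adjoint (pd_F D) (fst w) + (\<Sum>k\<in>{1..<j}. adjoint (pd_A D k) (snd w k))"

definition ip_blk :: "('u::real_inner, 'v, 'x, 'y::real_inner, 'z) prob_data
     \<Rightarrow> nat \<Rightarrow> 'u \<times> (nat \<Rightarrow> 'y) \<Rightarrow> 'u \<times> (nat \<Rightarrow> 'y) \<Rightarrow> real" where
  "ip_blk D j w w' = fst w \<bullet> fst w' + (\<Sum>k\<in>{1..<j}. snd w k \<bullet> snd w' k)"

definition blk_add :: "'u::real_vector \<times> (nat \<Rightarrow> 'y::real_vector) \<Rightarrow> 'u \<times> (nat \<Rightarrow> 'y)
     \<Rightarrow> 'u \<times> (nat \<Rightarrow> 'y)" where
  "blk_add w w' = (fst w + fst w', (\<lambda>k. snd w k + snd w' k))"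

definition corr :: "('u::euclidean_space, 'v, 'x::euclidean_space, 'y::euclidean_space, 'z) prob_data
     \<Rightarrow> nat \<Rightarrow> 'u \<times> (nat \<Rightarrow> 'y) \<Rightarrow> 'u \<times> (nat \<Rightarrow> 'y)" where
  "corr D j w = Fcal D j (adjoint (pd_A D j) (Einv D j (pd_A D j (Fcal_adj D j w))))"

text \<open>hat T_(f_i); the diagonal block diag(hat T_(f_(i-1)), T_theta_(i-1)) acts on
  (u, ys) by applying hat T_(f_(i-1)) to (u, ys 1, ..., ys (i-2)) and T_theta_(i-1) to ys (i-1).\<close>
fun That :: "('u::euclidean_space, 'v, 'x::euclidean_space, 'y::euclidean_space, 'z) prob_data
     \<Rightarrow> nat \<Rightarrow> 'u \<times> (nat \<Rightarrow> 'y) \<Rightarrow> 'u \<times> (nat \<Rightarrow> 'y)" where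
  "That D 0 w = w"
| "That D (Suc 0) w = blk_add (pd_Tf D (fst w), (\<lambda>k. 0)) (corr D 1 w)"
| "That D (Suc (Suc i)) w =
     blk_add (fst (That D (Suc i) w),
              (snd (That D (Suc i) w))(Suc i := Ttheta D (Suc i) (snd w (Suc i))))
             (corr D (Suc (Suc i)) w)"

text \<open>The table beta_tab D ... n contains, for k = p-n+1, ..., p, the vector
  w_k = A_k^* E_theta_k^-1 (...) in X, so that beta_(k,j) = A_(j-1) w_k (A_0 = F).\<close>

definition Aop :: "('u, 'v, 'x, 'y, 'z) prob_data \<Rightarrow> nat \<Rightarrow> 'x \<Rightarrow> 'u + 'y" where
  "Aop D j x = (if j = 0 then Inl (pd_F D x) else Inr (pd_A D j x))"

primrec wtab :: "('u::euclidean_space, 'v::euclidean_space, 'x::euclidean_space,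
      'y::euclidean_space, 'z::euclidean_space) prob_data
     \<Rightarrow> (nat \<Rightarrow> 'y) \<Rightarrow> 'x \<Rightarrow> 'x \<Rightarrow> nat \<Rightarrow> nat \<Rightarrow> 'x" where
  "wtab D ybar xbar gbar 0 = (\<lambda>k. 0)"
| "wtab D ybar xbar gbar (Suc n) =
     (let i = pd_p D - n; prev = wtab D ybar xbar gbar n in
      prev(i := adjoint (pd_A D i) (Einv D i
         (pd_b D i - (\<Sum>k\<in>{i+1..pd_p D}. pd_A D i (prev k)) - pd_A D i xbar
          - pd_P D i (ybar i) + pd_sigma D *\<^sub>R pd_A D i gbar))))"

text \<open>beta D ubar ybar vbar zbar xbar i j = beta_(i,j), an element of U (as Inl) for j = 1
  and of Y_(j-1) (as Inr) for j >= 2.\<close>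
definition beta :: "('u::euclidean_space, 'v::euclidean_space, 'x::euclidean_space,
      'y::euclidean_space, 'z::euclidean_space) prob_data
     \<Rightarrow> 'u \<Rightarrow> (nat \<Rightarrow> 'y) \<Rightarrow> 'v \<Rightarrow> (nat \<Rightarrow> 'z) \<Rightarrow> 'x \<Rightarrow> nat \<Rightarrow> nat \<Rightarrow> 'u + 'y" where
  "beta D ubar ybar vbar zbar xbar i j =
     Aop D (j - 1) (wtab D ybar xbar (- Gam D ubar ybar vbar zbar) (pd_p D) i)"

definition delta_theta :: "('u::euclidean_space, 'v::euclidean_space, 'x::euclidean_space,
      'y::euclidean_space, 'z::euclidean_space) prob_data
     \<Rightarrow> 'u \<Rightarrow> (nat \<Rightarrow> 'y) \<Rightarrow> 'v \<Rightarrow> (nat \<Rightarrow> 'z) \<Rightarrow> 'x \<Rightarrow> 'u" where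
  "delta_theta D ubar ybar vbar zbar xbar =
     (\<Sum>i\<in>{1..pd_p D}. projl (beta D ubar ybar vbar zbar xbar i 1))"

definition mixY :: "(nat \<Rightarrow> 'y) \<Rightarrow> nat \<Rightarrow> 'y \<Rightarrow> (nat \<Rightarrow> 'y) \<Rightarrow> (nat \<Rightarrow> 'y)" where
  "mixY a i w b = (\<lambda>k. if k < i then a k else if k = i then w else b k)"

end

theory Submission
  imports Defs
begin

text \<open>
  With all blocks but y_i fixed, the i-th subproblem is a quadratic in y_i with Hessian
  sigma E_theta_i, so its unique minimiser is blk_min i u y = E_theta_i^-1 (blk_rhs i u y), and the
  right-hand side depends on (u, y_<i) only through A_i F_i^* Delta, Delta = (u - ubar, y - ybar).
  Since yp i = blk_min i ubar ybar, the correction term of hat T_(f_i) satisfies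
  <Delta, F_i A_i^* E_theta_i^-1 A_i F_i^* Delta> = |yp i - blk_min i u y|^2_(E_theta_i).
  Hence the sGS objective telescopes: at (u, y) it is the u-objective
  L_sigma(u, yp, ...) + sigma/2 |u - ubar|^2_(T_f), plus a constant, plus the sum over i of
  sigma/2 |y_i - blk_min i u y|^2_(E_theta_i). The forward sweep makes that sum vanish for every u,
  so joint minimisation is minimisation in u followed by the forward sweep. For the first
  description, delta_theta = sigma F (A^* (yp - ybar)), so the two u-objectives differ by a constant.
\<close>

section \<open>Quadratic forms on subspaces\<close>

lemma linear_inj_on_image_subspace_eq:
  fixes E :: "'a::euclidean_space \<Rightarrow> 'a"
  assumes "linear E" "subspace S" "E ` S \<subseteq> S" "inj_on E S"
  shows "E ` S = S"
proof (rule subspace_dim_equal)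
  show "subspace (E ` S)" using assms by (simp add: linear_subspace_image)
  show "dim S \<le> dim (E ` S)" using assms by (metis dim_image_eq order_refl span_eq_iff)
qed (use assms in auto)

context
  fixes S :: "'a::euclidean_space set" and E :: "'a \<Rightarrow> 'a"
  assumes S: "subspace S" and E_op: "op_on S E" and E_pd: "pd_on S E"
begin

lemma pd_on_inj_on: "inj_on E S"
proof (rule inj_onI, rule ccontr)
  fix a b assume ab: "a \<in> S" "b \<in> S" "E a = E b" "a \<noteq> b"
  then have "a - b \<in> S" "E (a - b) = 0"
    using S E_op by (auto simp: subspace_diff op_on_def linear_diff)
  then show False using E_pd ab(4) by (auto simp: pd_on_def)
qed

lemma inv_on_eqI: "v \<in> S \<Longrightarrow> E v = w \<Longrightarrow> inv_on S E w = v"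
  unfolding inv_on_def using pd_on_inj_on by (auto dest: inj_onD)

lemma inv_on_mem:
  assumes "w \<in> S"
  shows "inv_on S E w \<in> S" and "E (inv_on S E w) = w"
proof -
  have "E ` S = S"
    using S E_op pd_on_inj_on by (intro linear_inj_on_image_subspace_eq) (auto simp: op_on_def)
  then obtain v where "v \<in> S" "E v = w" using assms by force
  then show "inv_on S E w \<in> S" "E (inv_on S E w) = w" using inv_on_eqI by auto
qed

end

lemma sqn_nonneg_on: "pd_on S E \<Longrightarrow> w \<in> S \<Longrightarrow> 0 \<le> sqn E w"
  unfolding pd_on_def sqn_def by (cases "w = 0") (auto simp: less_imp_le)

lemma sqn_eq_0_iff_on: "pd_on S E \<Longrightarrow> w \<in> S \<Longrightarrow> sqn E w = 0 \<longleftrightarrow> w = 0"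
  unfolding pd_on_def sqn_def by force

lemma sqn_diff:
  assumes "linear T" "a \<bullet> T b = T a \<bullet> b"
  shows "sqn T (a - b) = sqn T a - 2 * (T a \<bullet> b) + sqn T b"
  using assms unfolding sqn_def
  by (simp add: linear_diff inner_diff_left inner_diff_right inner_commute[of b])

lemma is_arg_min_add_ereal_right:
  fixes f :: "'a \<Rightarrow> ereal"
  shows "is_arg_min (\<lambda>x. f x + ereal c) P x \<longleftrightarrow> is_arg_min f P x"
proof -
  have "f a + ereal c < f b + ereal c \<longleftrightarrow> f a < f b" for a b
    by (cases "f a"; cases "f b") auto
  then show ?thesis unfolding is_arg_min_def by auto
qed

lemma is_arg_min_ereal_add_left:
  assumes "c \<noteq> \<infinity>" "c \<noteq> -\<infinity>"
  shows "is_arg_min (\<lambda>x. c + ereal (f x)) P x \<longleftrightarrow> is_arg_min f P x"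
  using assms by (cases c) (auto simp: is_arg_min_def)

lemma is_arg_min_sqn_on:
  fixes E :: "'a::euclidean_space \<Rightarrow> 'a"
  assumes S: "subspace S" and E: "pd_on S E" and m: "m \<in> S" and c: "0 < c"
    and f: "\<And>w. w \<in> S \<Longrightarrow> f w = c * sqn E (w - m) + K"
  shows "is_arg_min f (\<lambda>w. w \<in> S) x \<longleftrightarrow> x = m"
proof
  assume x: "is_arg_min f (\<lambda>w. w \<in> S) x"
  show "x = m"
  proof (rule ccontr)
    assume "x \<noteq> m"
    moreover have "x \<in> S" using x by (simp add: is_arg_min_def)
    ultimately have "0 < sqn E (x - m)"
      using S E m by (auto simp: sqn_def pd_on_def subspace_diff)
    then have "f m < f x" using f c m \<open>x \<in> S\<close> by (simp add: sqn_def)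
    then show False using x m by (auto simp: is_arg_min_def)
  qed
next
  have "0 \<le> sqn E (w - m)" if "w \<in> S" for w
    using sqn_nonneg_on[OF E] S m that by (simp add: subspace_diff)
  then show "x = m \<Longrightarrow> is_arg_min f (\<lambda>w. w \<in> S) x"
    using f m c by (auto simp: is_arg_min_linorder sqn_def)
qed

lemma is_arg_min_pair_iff:
  fixes h :: "'a \<Rightarrow> ereal" and Q :: "'a \<Rightarrow> 'b \<Rightarrow> real"
  assumes h_fin: "\<exists>u. h u \<noteq> \<infinity>" and h_ninf: "\<And>u. h u \<noteq> -\<infinity>"
    and lower: "\<And>u y. P y \<Longrightarrow> m u \<le> Q u y"
    and attained: "\<And>u. \<exists>y. P y \<and> Q u y = m u"
  shows "is_arg_min (\<lambda>(u, y). h u + ereal (Q u y)) (\<lambda>(u, y). P y) (u', y') \<longleftrightarrow>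
         is_arg_min (\<lambda>u. h u + ereal (m u)) (\<lambda>_. True) u' \<and> P y' \<and> Q u' y' = m u'"
    (is "?joint \<longleftrightarrow> ?outer \<and> _ \<and> _")
proof
  assume ?joint
  then have y': "P y'" and le: "\<And>u y. P y \<Longrightarrow> h u' + ereal (Q u' y') \<le> h u + ereal (Q u y)"
    by (auto simp: is_arg_min_linorder)
  have outer_le: "h u' + ereal (Q u' y') \<le> h u + ereal (m u)" for u
    using attained[of u] le by metis
  have "h u' + ereal (m u') \<le> h u' + ereal (Q u' y')"
    using lower[OF y'] by (simp add: add_left_mono)
  with outer_le have ?outer by (auto simp: is_arg_min_linorder intro: order_trans)
  moreover have "Q u' y' = m u'"
  proof -
    obtain u0 where "h u0 \<noteq> \<infinity>" using h_fin by blast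
    then have "h u' \<noteq> \<infinity>" using outer_le[of u0] h_ninf[of u0] by (cases "h u0") auto
    then obtain r where r: "h u' = ereal r" using h_ninf[of u'] by (cases "h u'") auto
    have "Q u' y' \<le> m u'" using outer_le[of u'] r by simp
    then show ?thesis using lower[of y' u'] y' by simp
  qed
  ultimately show "?outer \<and> P y' \<and> Q u' y' = m u'" using y' by blast
next
  assume R: "?outer \<and> P y' \<and> Q u' y' = m u'"
  have "h u' + ereal (Q u' y') \<le> h u + ereal (Q u y)" if "P y" for u y
  proof -
    have "h u' + ereal (Q u' y') \<le> h u + ereal (m u)" using R by (simp add: is_arg_min_linorder)
    also have "\<dots> \<le> h u + ereal (Q u y)" using lower[OF that] by (simp add: add_left_mono)
    finally show ?thesis .
  qed
  then show ?joint using R by (auto simp: is_arg_min_linorder)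
qed

lemma lower_triangular_fixpoint:
  fixes F :: "nat \<Rightarrow> (nat \<Rightarrow> 'a) \<Rightarrow> 'a"
  assumes "\<And>k y y'. (\<And>l. l < k \<Longrightarrow> y l = y' l) \<Longrightarrow> F k y = F k y'"
  shows "\<exists>y. \<forall>k. y k = F k y"
proof -
  define s where "s = rec_nat (\<lambda>_. undefined) (\<lambda>n t. t(n := F n t))"
  have s_Suc: "s (Suc n) = (s n)(n := F n (s n))" for n by (simp add: s_def)
  have stable: "s m l = s n l" if "n \<le> m" "l < n" for l m n
    using that by (induction m rule: dec_induct) (simp_all add: s_Suc)
  define y where "y k = s (Suc k) k" for k
  have "y k = F k y" for k
  proof -
    have "F k (s k) = F k y"
      by (rule assms) (simp add: y_def stable)
    then show ?thesis by (simp add: y_def s_Suc)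
  qed
  then show ?thesis by blast
qed

lemma sum_mixY:
  fixes h :: "nat \<Rightarrow> 'a::zero \<Rightarrow> 'b::ab_group_add"
  assumes "finite I" "i \<in> I"
  shows "(\<Sum>k\<in>I. h k (mixY y i w z k)) = (\<Sum>k\<in>I. h k (mixY y i 0 z k)) + h i w - h i 0"
proof -
  have "(\<Sum>k\<in>I - {i}. h k (mixY y i w z k)) = (\<Sum>k\<in>I - {i}. h k (mixY y i 0 z k))"
    by (rule sum.cong) (auto simp: mixY_def)
  then show ?thesis
    using assms by (simp add: sum.remove[of I i] mixY_def algebra_simps)
qed

lemma ip_blk_blk_add: "ip_blk D j d (blk_add a b) = ip_blk D j d a + ip_blk D j d b"
  unfolding ip_blk_def blk_add_def by (simp add: inner_add_right sum.distrib)

lemma ip_blk_upd: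
  "ip_blk D (Suc (Suc i)) d (fst w, (snd w)(Suc i := t)) = ip_blk D (Suc i) d w + snd d (Suc i) \<bullet> t"
proof -
  have "(\<Sum>k\<in>{1..<Suc i}. snd d k \<bullet> ((snd w)(Suc i := t)) k) = (\<Sum>k\<in>{1..<Suc i}. snd d k \<bullet> snd w k)"
    by (rule sum.cong) auto
  moreover have "{1..<Suc (Suc i)} = insert (Suc i) {1..<Suc i}" by auto
  ultimately show ?thesis unfolding ip_blk_def by (simp add: algebra_simps)
qed

section \<open>Block subproblems\<close>

locale sgs_data =
  fixes D :: "('u::euclidean_space, 'v::euclidean_space, 'x::euclidean_space,
               'y::euclidean_space, 'z::euclidean_space) prob_data"
    and ubar :: 'u and ybar :: "nat \<Rightarrow> 'y" and vbar :: 'v and zbar :: "nat \<Rightarrow> 'z"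
    and xbar :: 'x and yp :: "nat \<Rightarrow> 'y"
  assumes wf: "wf_data D"
    and ybar: "ybar \<in> PiE {1..pd_p D} (pd_SY D)"
    and yp: "yp \<in> PiE {1..pd_p D} (pd_SY D)"
begin

abbreviation "sig \<equiv> pd_sigma D"
abbreviation "pp \<equiv> pd_p D"

lemma sig_pos: "0 < sig" and p_pos: "1 \<le> pp" and linear_F: "linear (pd_F D)"
  using wf by (simp_all add: wf_data_def)

context
  fixes i assumes i: "i \<in> {1..pp}"
begin

lemma block:
  "subspace (pd_SY D i)" "linear (pd_A D i)" "\<And>x. pd_A D i x \<in> pd_SY D i"
  "op_on (pd_SY D i) (pd_P D i)" "selfadj_on (pd_SY D i) (pd_P D i)" "pd_b D i \<in> pd_SY D i"
  "op_on (pd_SY D i) (pd_E D i)" "selfadj_on (pd_SY D i) (pd_E D i)" "pd_on (pd_SY D i) (pd_E D i)"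
  using wf i unfolding wf_data_def by blast+

lemma ybar_mem: "ybar i \<in> pd_SY D i" and yp_mem: "yp i \<in> pd_SY D i"
  using ybar yp i by auto

lemma linear_A_adj: "linear (adjoint (pd_A D i))"
  by (rule adjoint_linear[OF block(2)])

lemma linear_P: "linear (pd_P D i)" and linear_E: "linear (pd_E D i)"
  using block(4,7) by (simp_all add: op_on_def)

lemma linear_Ttheta: "linear (Ttheta D i)"
  by (rule linearI) (simp_all add: Ttheta_def algebra_simps linear_add[OF linear_E]
      linear_add[OF linear_P] linear_add[OF linear_A_adj] linear_add[OF block(2)]
      linear_scale[OF linear_E] linear_scale[OF linear_P] linear_scale[OF linear_A_adj]
      linear_scale[OF block(2)])

lemma Ttheta_mem: "y \<in> pd_SY D i \<Longrightarrow> Ttheta D i y \<in> pd_SY D i"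
  using block(1,3,4,7) unfolding Ttheta_def op_on_def
  by (intro subspace_diff subspace_scale) auto

lemma E_decomp:
  "pd_E D i y = Ttheta D i y + (1/sig) *\<^sub>R pd_P D i y + pd_A D i (adjoint (pd_A D i) y)"
  by (simp add: Ttheta_def)

lemma Ttheta_selfadj:
  assumes "a \<in> pd_SY D i" "b \<in> pd_SY D i"
  shows "a \<bullet> Ttheta D i b = Ttheta D i a \<bullet> b"
proof -
  have "a \<bullet> pd_A D i (adjoint (pd_A D i) b) = pd_A D i (adjoint (pd_A D i) a) \<bullet> b"
    by (metis adjoint_clauses(1) block(2) inner_commute)
  then show ?thesis
    using block(5,8) assms by (simp add: Ttheta_def selfadj_on_def inner_diff_right inner_diff_left)
qed

lemma Einv_eqI: "v \<in> pd_SY D i \<Longrightarrow> pd_E D i v = w \<Longrightarrow> Einv D i w = v"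
  unfolding Einv_def by (rule inv_on_eqI[OF block(1,7,9)])

lemma Einv_mem: "w \<in> pd_SY D i \<Longrightarrow> Einv D i w \<in> pd_SY D i"
  and E_Einv: "w \<in> pd_SY D i \<Longrightarrow> pd_E D i (Einv D i w) = w"
  unfolding Einv_def by (simp_all add: inv_on_mem[OF block(1,7,9)])

end

definition "Gam_rest = adjoint (pd_G D) vbar + (\<Sum>j\<in>{1..pd_q D}. adjoint (pd_B D j) (zbar j)) - pd_c D"

definition "A_adj_sum ys = (\<Sum>i\<in>{1..pp}. adjoint (pd_A D i) (ys i))"

lemma Gam_eq: "Gam D u ys vbar zbar = adjoint (pd_F D) u + A_adj_sum ys + Gam_rest"
  by (simp add: Gam_def Gam_rest_def A_adj_sum_def algebra_simps)

definition Lreal :: "'u \<Rightarrow> (nat \<Rightarrow> 'y) \<Rightarrow> real" where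
  "Lreal u ys = (\<Sum>i\<in>{1..pp}. theta D i (ys i)) + (\<Sum>j\<in>{1..pd_q D}. phi D j (zbar j))
     + xbar \<bullet> Gam D u ys vbar zbar + sig/2 * (norm (Gam D u ys vbar zbar))\<^sup>2"

lemma Lsig_eq: "Lsig D u ys vbar zbar xbar = pd_f D u + pd_g D vbar + ereal (Lreal u ys)"
  by (simp add: Lsig_def Lreal_def)

lemma Lreal_cong: "(\<And>k. k \<in> {1..pp} \<Longrightarrow> a k = b k) \<Longrightarrow> Lreal u a = Lreal u b"
  by (simp add: Lreal_def Gam_eq A_adj_sum_def)

text \<open>In the i-th forward subproblem the blocks after i are taken from the backward sweep yp.\<close>

definition "Gam_off i u y = Gam D u (mixY y i 0 yp) vbar zbar"

definition blk_obj :: "nat \<Rightarrow> 'u \<Rightarrow> (nat \<Rightarrow> 'y) \<Rightarrow> 'y \<Rightarrow> real" where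
  "blk_obj i u y w = Lreal u (mixY y i w yp) + sig/2 * sqn (Ttheta D i) (w - ybar i)"

definition "blk_rhs i u y = (1/sig) *\<^sub>R (pd_b D i - pd_A D i xbar) - pd_A D i (Gam_off i u y)
   + Ttheta D i (ybar i)"

definition "blk_min i u y = Einv D i (blk_rhs i u y)"

lemma Lsig_blk_obj:
  "Lsig D u (mixY y i w yp) vbar zbar xbar + ereal (sig/2 * sqn (Ttheta D i) (w - ybar i))
     = pd_f D u + pd_g D vbar + ereal (blk_obj i u y w)"
  by (simp add: Lsig_eq blk_obj_def add.assoc)

lemma blk_min_cong:
  assumes "\<And>l. l \<in> {1..pp} \<Longrightarrow> l < i \<Longrightarrow> a l = b l"
  shows "blk_min i u a = blk_min i u b"
proof -
  have "A_adj_sum (mixY a i 0 yp) = A_adj_sum (mixY b i 0 yp)"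
    unfolding A_adj_sum_def using assms by (intro sum.cong) (auto simp: mixY_def)
  then show ?thesis by (simp add: blk_min_def blk_rhs_def Gam_off_def Gam_eq)
qed

context
  fixes i assumes i: "i \<in> {1..pp}"
begin

lemma Gam_mixY: "Gam D u (mixY y i w yp) vbar zbar = Gam_off i u y + adjoint (pd_A D i) w"
  unfolding Gam_off_def Gam_eq A_adj_sum_def
  using sum_mixY[OF _ i, of "\<lambda>k v. adjoint (pd_A D k) v" y w yp] linear_0[OF linear_A_adj[OF i]]
  by (simp add: algebra_simps)

lemma theta_sum_mixY:
  "(\<Sum>k\<in>{1..pp}. theta D k (mixY y i w yp k))
     = (\<Sum>k\<in>{1..pp}. theta D k (mixY y i 0 yp k)) + theta D i w"
  using sum_mixY[OF _ i, of "\<lambda>k v. theta D k v" y w yp] linear_0[OF linear_P[OF i]]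
  by (simp add: theta_def)

lemma blk_rhs_mem: "blk_rhs i u y \<in> pd_SY D i"
  unfolding blk_rhs_def using block[OF i] Ttheta_mem[OF i ybar_mem[OF i]]
  by (intro subspace_add subspace_diff subspace_scale) auto

lemma blk_min_mem: "blk_min i u y \<in> pd_SY D i"
  and E_blk_min: "pd_E D i (blk_min i u y) = blk_rhs i u y"
  unfolding blk_min_def using Einv_mem[OF i blk_rhs_mem] E_Einv[OF i blk_rhs_mem] by auto

lemma blk_obj_expand:
  assumes w: "w \<in> pd_SY D i"
  shows "blk_obj i u y w = blk_obj i u y 0 + sig/2 * sqn (pd_E D i) w - sig * (blk_rhs i u y \<bullet> w)"
proof -
  let ?A = "pd_A D i" and ?At = "adjoint (pd_A D i)" and ?T = "Ttheta D i" and ?P = "pd_P D i"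
  define R where "R = Gam_off i u y"
  have yb: "ybar i \<in> pd_SY D i" by (rule ybar_mem[OF i])
  have theta: "theta D i w = 1/2 * (w \<bullet> ?P w) - pd_b D i \<bullet> w"
    by (simp add: theta_def inner_commute)
  have dual: "xbar \<bullet> ?At w = ?A xbar \<bullet> w" "R \<bullet> ?At w = ?A R \<bullet> w" "?At w \<bullet> ?At w = ?A (?At w) \<bullet> w"
    by (simp_all add: adjoint_works[OF block(2)[OF i]])
  have norm: "(norm (R + ?At w))\<^sup>2 = (norm R)\<^sup>2 + 2 * (?A R \<bullet> w) + ?A (?At w) \<bullet> w"
    unfolding power2_norm_eq_inner inner_add_left inner_add_right inner_commute[of "?At w" R] dual
    by simp
  have "?T w \<bullet> ybar i = ?T (ybar i) \<bullet> w"
    using Ttheta_selfadj[OF i yb w] by (simp add: inner_commute)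
  then have prox: "sqn ?T (w - ybar i) = sqn ?T w - 2 * (?T (ybar i) \<bullet> w) + sqn ?T (ybar i)"
    using sqn_diff[OF linear_Ttheta[OF i] Ttheta_selfadj[OF i w yb]] by simp
  have prox0: "sqn ?T (0 - ybar i) = sqn ?T (ybar i)"
    by (simp add: sqn_def linear_neg[OF linear_Ttheta[OF i]])
  have E: "sqn (pd_E D i) w = sqn ?T w + (1/sig) * (w \<bullet> ?P w) + ?A (?At w) \<bullet> w"
    unfolding sqn_def E_decomp[OF i] by (simp add: inner_add_right inner_commute)
  have rhs: "blk_rhs i u y \<bullet> w = (1/sig) * (pd_b D i \<bullet> w - ?A xbar \<bullet> w) - ?A R \<bullet> w + ?T (ybar i) \<bullet> w"
    unfolding blk_rhs_def R_def by (simp add: inner_add_left inner_diff_left)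
  show ?thesis
    unfolding blk_obj_def Lreal_def Gam_mixY theta_sum_mixY[of y w]
      R_def[symmetric] inner_add_right dual(1) norm prox prox0 E rhs theta
    using sig_pos by (simp add: linear_0[OF linear_A_adj[OF i]] field_simps)
qed

lemma blk_obj_square:
  assumes w: "w \<in> pd_SY D i"
  shows "blk_obj i u y w = sig/2 * sqn (pd_E D i) (w - blk_min i u y)
           + (blk_obj i u y 0 - sig/2 * (blk_min i u y \<bullet> blk_rhs i u y))"
proof -
  have sym: "w \<bullet> pd_E D i (blk_min i u y) = pd_E D i w \<bullet> blk_min i u y"
    using block(8)[OF i] w blk_min_mem unfolding selfadj_on_def by blast
  then have sq: "sqn (pd_E D i) (w - blk_min i u y)
      = sqn (pd_E D i) w - 2 * (blk_rhs i u y \<bullet> w) + blk_min i u y \<bullet> blk_rhs i u y"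
    using sqn_diff[OF linear_E[OF i] sym] by (simp add: E_blk_min sqn_def inner_commute)
  show ?thesis unfolding blk_obj_expand[OF w, of u y] sq by (simp add: algebra_simps)
qed

lemma is_arg_min_blk_obj:
  assumes "c \<noteq> \<infinity>" "c \<noteq> -\<infinity>"
  shows "is_arg_min (\<lambda>w. c + ereal (blk_obj i u y w)) (\<lambda>w. w \<in> pd_SY D i) x \<longleftrightarrow> x = blk_min i u y"
  unfolding is_arg_min_ereal_add_left[OF assms]
  using sig_pos blk_obj_square
  by (intro is_arg_min_sqn_on[OF block(1,9)[OF i] blk_min_mem, where c = "sig/2"
        and K = "blk_obj i u y 0 - sig/2 * (blk_min i u y \<bullet> blk_rhs i u y)"]) auto

lemma Gam_off_shift:
  "Gam_off i u y = Gam_off i ubar ybar + Fcal_adj D i (u - ubar, \<lambda>k. y k - ybar k)"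
proof -
  have "A_adj_sum (mixY y i 0 yp) - A_adj_sum (mixY ybar i 0 yp)
      = (\<Sum>k\<in>{1..pp}. if k < i then adjoint (pd_A D k) (y k - ybar k) else 0)"
    unfolding A_adj_sum_def sum_subtractf[symmetric]
    by (rule sum.cong) (auto simp: mixY_def linear_diff[OF linear_A_adj])
  also have "\<dots> = (\<Sum>k\<in>{1..pp} \<inter> {k. k < i}. adjoint (pd_A D k) (y k - ybar k))"
    by (simp add: sum.inter_restrict)
  also have "{1..pp} \<inter> {k. k < i} = {1..<i}" using i by auto
  finally show ?thesis
    unfolding Gam_off_def Gam_eq Fcal_adj_def
    by (simp add: linear_diff[OF adjoint_linear[OF linear_F]] algebra_simps)
qed

lemma blk_min_shift:
  "blk_min i u y = blk_min i ubar ybar - Einv D i (pd_A D i (Fcal_adj D i (u - ubar, \<lambda>k. y k - ybar k)))"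
proof -
  define a where "a = pd_A D i (Fcal_adj D i (u - ubar, \<lambda>k. y k - ybar k))"
  have a: "a \<in> pd_SY D i" unfolding a_def by (rule block(3)[OF i])
  have "blk_rhs i u y = blk_rhs i ubar ybar - a"
    unfolding blk_rhs_def Gam_off_shift[of u y] a_def by (simp add: linear_add[OF block(2)[OF i]])
  then have "pd_E D i (blk_min i ubar ybar - Einv D i a) = blk_rhs i u y"
    by (simp add: linear_diff[OF linear_E[OF i]] E_blk_min E_Einv[OF i a])
  with blk_min_mem Einv_mem[OF i a] show ?thesis
    unfolding blk_min_def[of i u y] a_def[symmetric]
    by (intro Einv_eqI[OF i]) (simp_all add: subspace_diff[OF block(1)[OF i]])
qed

end

text \<open>prox_form j is the quadratic form of diag(hat T_(f_j), T_theta_j), read as T_f for j = 0,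
  so that hat T_(f_(j+1)) is this block operator plus the correction term at j + 1.\<close>

definition prox_form :: "nat \<Rightarrow> 'u \<times> (nat \<Rightarrow> 'y) \<Rightarrow> real" where
  "prox_form j d = (if j = 0 then sqn (pd_Tf D) (fst d)
     else ip_blk D j d (That D j d) + sqn (Ttheta D j) (snd d j))"

lemma ip_That_Suc:
  "ip_blk D (Suc j) d (That D (Suc j) d) = prox_form j d + ip_blk D (Suc j) d (corr D (Suc j) d)"
proof (cases j)
  case 0
  then show ?thesis by (simp add: ip_blk_blk_add prox_form_def) (simp add: ip_blk_def sqn_def)
next
  case (Suc i)
  then show ?thesis
    unfolding Suc That.simps(3) ip_blk_blk_add ip_blk_upd
    by (simp add: prox_form_def sqn_def del: That.simps)
qed

lemma ip_blk_Fcal: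
  assumes "j \<le> pp"
  shows "ip_blk D j d (Fcal D j x) = Fcal_adj D j d \<bullet> x"
proof -
  have "(\<Sum>k\<in>{1..<j}. snd d k \<bullet> (if k \<in> {1..<j} then pd_A D k x else 0))
      = (\<Sum>k\<in>{1..<j}. adjoint (pd_A D k) (snd d k) \<bullet> x)"
    using assms by (intro sum.cong) (auto simp: adjoint_clauses(2)[OF block(2)])
  then show ?thesis
    unfolding ip_blk_def Fcal_def Fcal_adj_def
    by (simp add: inner_add_left inner_sum_left adjoint_clauses(2)[OF linear_F])
qed

lemma ip_blk_corr:
  assumes j: "j \<in> {1..pp}"
  shows "ip_blk D j d (corr D j d) = Einv D j (pd_A D j (Fcal_adj D j d)) \<bullet> pd_A D j (Fcal_adj D j d)"
  using j by (simp add: corr_def ip_blk_Fcal adjoint_works[OF block(2)[OF j]] inner_commute)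

definition partial_obj :: "nat \<Rightarrow> 'u \<Rightarrow> (nat \<Rightarrow> 'y) \<Rightarrow> real" where
  "partial_obj j u y = Lreal u (\<lambda>k. if k \<le> j then y k else yp k)
     + sig/2 * prox_form j (u - ubar, \<lambda>k. y k - ybar k)"

definition u_obj :: "'u \<Rightarrow> real" where
  "u_obj u = Lreal u yp + sig/2 * sqn (pd_Tf D) (u - ubar)"

lemma partial_obj_0: "partial_obj 0 u y = u_obj u"
proof -
  have "Lreal u (\<lambda>k. if k \<le> 0 then y k else yp k) = Lreal u yp" by (rule Lreal_cong) auto
  then show ?thesis by (simp add: partial_obj_def u_obj_def prox_form_def)
qed

lemma partial_obj_prev:
  assumes j: "j \<in> {1..pp}"
  shows "partial_obj (j - 1) u y = blk_obj j u y (yp j) - sig/2 * sqn (Ttheta D j) (yp j - ybar j)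
     + sig/2 * (ip_blk D j (u - ubar, \<lambda>k. y k - ybar k) (That D j (u - ubar, \<lambda>k. y k - ybar k))
       - ip_blk D j (u - ubar, \<lambda>k. y k - ybar k) (corr D j (u - ubar, \<lambda>k. y k - ybar k)))"
proof -
  have "(\<lambda>k. if k \<le> j - 1 then y k else yp k) = mixY y j (yp j) yp"
    using j by (auto simp: mixY_def fun_eq_iff)
  moreover have "Suc (j - 1) = j" using j by simp
  ultimately show ?thesis
    using ip_That_Suc[of "j - 1" "(u - ubar, \<lambda>k. y k - ybar k)"]
    by (simp add: partial_obj_def blk_obj_def del: That.simps)
qed

lemma partial_obj_cur:
  assumes "j \<noteq> 0"
  shows "partial_obj j u y = blk_obj j u y (y j)
     + sig/2 * ip_blk D j (u - ubar, \<lambda>k. y k - ybar k) (That D j (u - ubar, \<lambda>k. y k - ybar k))"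
proof -
  have "(\<lambda>k. if k \<le> j then y k else yp k) = mixY y j (y j) yp" by (auto simp: mixY_def)
  then show ?thesis using assms by (simp add: partial_obj_def blk_obj_def prox_form_def algebra_simps)
qed

lemma Lsig_partial_obj:
  "Lsig D u y vbar zbar xbar
     + ereal (sig/2 * ip_blk D pp (u - ubar, \<lambda>k. y k - ybar k) (That D pp (u - ubar, \<lambda>k. y k - ybar k))
              + sig/2 * sqn (Ttheta D pp) (y pp - ybar pp))
   = pd_f D u + pd_g D vbar + ereal (partial_obj pp u y)"
proof -
  have "Lreal u (\<lambda>k. if k \<le> pp then y k else yp k) = Lreal u y" by (rule Lreal_cong) auto
  then show ?thesis
    using p_pos by (simp add: Lsig_eq partial_obj_def prox_form_def add.assoc distrib_left del: That.simps)
qed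

lemma Lsig_u_obj:
  "Lsig D u yp vbar zbar xbar + ereal (sig/2 * sqn (pd_Tf D) (u - ubar))
     = pd_f D u + pd_g D vbar + ereal (u_obj u)"
  by (simp add: Lsig_eq u_obj_def add.assoc)

lemma Lreal_shift:
  "Lreal u y = Lreal 0 y + xbar \<bullet> adjoint (pd_F D) u
     + sig * (adjoint (pd_F D) u \<bullet> Gam D 0 y vbar zbar) + sig/2 * (norm (adjoint (pd_F D) u))\<^sup>2"
proof -
  define a where "a = adjoint (pd_F D) u"
  have "Gam D u y vbar zbar = a + Gam D 0 y vbar zbar"
    unfolding Gam_eq a_def by (simp add: linear_0[OF adjoint_linear[OF linear_F]])
  then show ?thesis
    unfolding Lreal_def a_def[symmetric]
    by (simp add: power2_norm_eq_inner inner_add_left inner_add_right inner_commute algebra_simps)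
qed

end

section \<open>The symmetric Gauss-Seidel decomposition\<close>

locale sgs_sweep = sgs_data +
  assumes g_fin: "pd_g D vbar \<noteq> \<infinity>" and ubar_dom: "pd_f D ubar \<noteq> \<infinity>"
    and yp_min: "\<forall>i\<in>{1..pd_p D}.
       is_arg_min (\<lambda>w. Lsig D ubar (mixY ybar i w yp) vbar zbar xbar
                        + ereal (pd_sigma D / 2 * sqn (Ttheta D i) (w - ybar i)))
                  (\<lambda>w. w \<in> pd_SY D i) (yp i)"
begin

lemma fg_ninf: "pd_f D u + pd_g D vbar \<noteq> -\<infinity>"
  and fg_fin: "pd_f D u \<noteq> \<infinity> \<Longrightarrow> pd_f D u + pd_g D vbar \<noteq> \<infinity>"
  using wf g_fin unfolding wf_data_def closed_proper_convex_def proper_fun_def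
  by (cases "pd_f D u"; cases "pd_g D vbar"; auto)+

lemma yp_eq_blk_min:
  assumes i: "i \<in> {1..pp}"
  shows "yp i = blk_min i ubar ybar"
proof -
  have "is_arg_min (\<lambda>w. pd_f D ubar + pd_g D vbar + ereal (blk_obj i ubar ybar w))
      (\<lambda>w. w \<in> pd_SY D i) (yp i)"
    using yp_min i unfolding Lsig_blk_obj by blast
  then show ?thesis using is_arg_min_blk_obj[OF i fg_fin[OF ubar_dom] fg_ninf] by simp
qed

lemma partial_obj_step:
  assumes j: "j \<in> {1..pp}" and yj: "y j \<in> pd_SY D j"
  shows "partial_obj j u y = partial_obj (j - 1) u y + sig/2 * sqn (pd_E D j) (y j - blk_min j u y)
           + sig/2 * sqn (Ttheta D j) (yp j - ybar j)"
proof -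
  define d where "d = (u - ubar, \<lambda>k. y k - ybar k)"
  define a where "a = pd_A D j (Fcal_adj D j d)"
  have a: "a \<in> pd_SY D j" unfolding a_def by (rule block(3)[OF j])
  have not0: "j \<noteq> 0" using j by simp
  have gap: "yp j - blk_min j u y = Einv D j a"
    using blk_min_shift[OF j, of u y] yp_eq_blk_min[OF j] unfolding a_def d_def by simp
  have corr: "sqn (pd_E D j) (yp j - blk_min j u y) = ip_blk D j d (corr D j d)"
    unfolding ip_blk_corr[OF j] a_def[symmetric] sqn_def gap E_Einv[OF j a] ..
  show ?thesis
    using blk_obj_square[OF j yj, of u y] blk_obj_square[OF j yp_mem[OF j], of u y] corr j
    unfolding partial_obj_cur[of j, OF not0] partial_obj_prev[OF j] d_def
    by (simp add: algebra_simps)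
qed

lemma partial_obj_telescope:
  assumes y: "\<And>k. k \<in> {1..pp} \<Longrightarrow> y k \<in> pd_SY D k"
  shows "j \<le> pp \<Longrightarrow> partial_obj j u y = u_obj u + (\<Sum>k\<in>{1..j}.
      sig/2 * sqn (pd_E D k) (y k - blk_min k u y) + sig/2 * sqn (Ttheta D k) (yp k - ybar k))"
proof (induction j)
  case 0
  then show ?case by (simp add: partial_obj_0)
next
  case (Suc j)
  then show ?case using partial_obj_step[of "Suc j" y u] y[of "Suc j"] by (simp add: sum.cl_ivl_Suc)
qed

definition "prox_const = (\<Sum>k\<in>{1..pp}. sig/2 * sqn (Ttheta D k) (yp k - ybar k))"

definition "sweep_gap u y = (\<Sum>k\<in>{1..pp}. sig/2 * sqn (pd_E D k) (y k - blk_min k u y))"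

lemma partial_obj_decomp:
  assumes "y \<in> PiE {1..pp} (pd_SY D)"
  shows "partial_obj pp u y = u_obj u + prox_const + sweep_gap u y"
  using partial_obj_telescope[of y pp u] assms
  by (simp add: PiE_iff prox_const_def sweep_gap_def sum.distrib)

lemma sweep_gap_term_nonneg:
  assumes "y \<in> PiE {1..pp} (pd_SY D)" "k \<in> {1..pp}"
  shows "0 \<le> sig/2 * sqn (pd_E D k) (y k - blk_min k u y)"
proof -
  have "y k - blk_min k u y \<in> pd_SY D k"
    using assms blk_min_mem subspace_diff[OF block(1)] by (auto simp: PiE_iff)
  then show ?thesis using sig_pos sqn_nonneg_on[OF block(9)[OF assms(2)]] by simp
qed

lemma sweep_gap_nonneg: "y \<in> PiE {1..pp} (pd_SY D) \<Longrightarrow> 0 \<le> sweep_gap u y"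
  unfolding sweep_gap_def by (rule sum_nonneg) (rule sweep_gap_term_nonneg)

lemma sweep_gap_eq_0_iff:
  assumes y: "y \<in> PiE {1..pp} (pd_SY D)"
  shows "sweep_gap u y = 0 \<longleftrightarrow> (\<forall>k\<in>{1..pp}. y k = blk_min k u y)"
proof -
  have "sweep_gap u y = 0 \<longleftrightarrow> (\<forall>k\<in>{1..pp}. sig/2 * sqn (pd_E D k) (y k - blk_min k u y) = 0)"
    unfolding sweep_gap_def by (rule sum_nonneg_eq_0_iff[OF finite_atLeastAtMost sweep_gap_term_nonneg[OF y]])
  also have "\<dots> \<longleftrightarrow> (\<forall>k\<in>{1..pp}. y k = blk_min k u y)"
  proof (intro ball_cong refl)
    fix k assume k: "k \<in> {1..pp}"
    have "y k - blk_min k u y \<in> pd_SY D k"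
      using y k blk_min_mem[OF k] subspace_diff[OF block(1)[OF k]] by (auto simp: PiE_iff)
    then show "sig/2 * sqn (pd_E D k) (y k - blk_min k u y) = 0 \<longleftrightarrow> y k = blk_min k u y"
      using sig_pos sqn_eq_0_iff_on[OF block(9)[OF k]] by simp
  qed
  finally show ?thesis .
qed

lemma forward_sweep: "\<exists>y \<in> PiE {1..pp} (pd_SY D). \<forall>k\<in>{1..pp}. y k = blk_min k u y"
proof -
  obtain y where y: "\<And>k. y k = blk_min k u y"
    using lower_triangular_fixpoint[of "\<lambda>k. blk_min k u"] blk_min_cong by metis
  have "blk_min k u (restrict y {1..pp}) = blk_min k u y" for k
    by (rule blk_min_cong) simp
  then show ?thesis
    using y blk_min_mem by (intro bexI[of _ "restrict y {1..pp}"]) auto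
qed

lemma is_arg_min_sgs_iff:
  assumes yplus: "yplus \<in> PiE {1..pp} (pd_SY D)"
  shows "is_arg_min (\<lambda>(u, y). pd_f D u + pd_g D vbar + ereal (partial_obj pp u y))
           (\<lambda>(u, y). y \<in> PiE {1..pp} (pd_SY D)) (uplus, yplus)
     \<longleftrightarrow> is_arg_min (\<lambda>u. pd_f D u + pd_g D vbar + ereal (u_obj u)) (\<lambda>_. True) uplus
       \<and> (\<forall>i\<in>{1..pp}. is_arg_min (\<lambda>w. pd_f D uplus + pd_g D vbar + ereal (blk_obj i uplus yplus w))
                        (\<lambda>w. w \<in> pd_SY D i) (yplus i))"
    (is "_ \<longleftrightarrow> ?outer \<and> ?blocks")
proof -
  have joint: "is_arg_min (\<lambda>(u, y). pd_f D u + pd_g D vbar + ereal (partial_obj pp u y))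
           (\<lambda>(u, y). y \<in> PiE {1..pp} (pd_SY D)) (uplus, yplus)
     \<longleftrightarrow> is_arg_min (\<lambda>u. pd_f D u + pd_g D vbar + ereal (u_obj u + prox_const)) (\<lambda>_. True) uplus
       \<and> yplus \<in> PiE {1..pp} (pd_SY D) \<and> partial_obj pp uplus yplus = u_obj uplus + prox_const"
  proof (rule is_arg_min_pair_iff)
    show "\<exists>u. pd_f D u + pd_g D vbar \<noteq> \<infinity>" using fg_fin[OF ubar_dom] by blast
    show "u_obj u + prox_const \<le> partial_obj pp u y" if "y \<in> PiE {1..pp} (pd_SY D)" for u y
      using partial_obj_decomp[OF that] sweep_gap_nonneg[OF that] by simp
    show "\<exists>y. y \<in> PiE {1..pp} (pd_SY D) \<and> partial_obj pp u y = u_obj u + prox_const" for u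
    proof -
      obtain y where y: "y \<in> PiE {1..pp} (pd_SY D)" and "\<forall>k\<in>{1..pp}. y k = blk_min k u y"
        using forward_sweep by blast
      then have "sweep_gap u y = 0" using sweep_gap_eq_0_iff by blast
      then show ?thesis using y partial_obj_decomp[OF y] by auto
    qed
  qed (rule fg_ninf)
  have outer: "is_arg_min (\<lambda>u. pd_f D u + pd_g D vbar + ereal (u_obj u + prox_const)) (\<lambda>_. True) uplus
      \<longleftrightarrow> ?outer"
    using is_arg_min_add_ereal_right[of "\<lambda>u. pd_f D u + pd_g D vbar + ereal (u_obj u)" prox_const]
    by (simp add: add.assoc)
  have blocks: "?blocks \<longleftrightarrow> partial_obj pp uplus yplus = u_obj uplus + prox_const" if ?outer
  proof -
    have "pd_f D uplus + pd_g D vbar + ereal (u_obj uplus) \<le> pd_f D ubar + pd_g D vbar + ereal (u_obj ubar)"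
      using that by (simp add: is_arg_min_linorder)
    then have fin: "pd_f D uplus + pd_g D vbar \<noteq> \<infinity>"
      using fg_fin[OF ubar_dom] by (cases "pd_f D ubar + pd_g D vbar") auto
    have "?blocks \<longleftrightarrow> (\<forall>k\<in>{1..pp}. yplus k = blk_min k uplus yplus)"
      using is_arg_min_blk_obj[OF _ fin fg_ninf] by (intro ball_cong) auto
    then show ?thesis
      using sweep_gap_eq_0_iff[OF yplus] partial_obj_decomp[OF yplus] by simp
  qed
  show ?thesis using joint outer blocks yplus by blast
qed

lemma is_arg_min_sgs_Lsig_iff:
  assumes yplus: "yplus \<in> PiE {1..pp} (pd_SY D)"
  shows "is_arg_min
       (\<lambda>(u, ys). Lsig D u ys vbar zbar xbar
          + ereal (sig/2 * ip_blk D pp (u - ubar, \<lambda>k. ys k - ybar k) (That D pp (u - ubar, \<lambda>k. ys k - ybar k))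
                   + sig/2 * sqn (Ttheta D pp) (ys pp - ybar pp)))
       (\<lambda>(u, ys). ys \<in> PiE {1..pp} (pd_SY D)) (uplus, yplus)
     \<longleftrightarrow> is_arg_min (\<lambda>u. Lsig D u yp vbar zbar xbar + ereal (sig/2 * sqn (pd_Tf D) (u - ubar)))
           (\<lambda>u. True) uplus
       \<and> (\<forall>i\<in>{1..pp}.
            is_arg_min (\<lambda>w. Lsig D uplus (mixY yplus i w yp) vbar zbar xbar
                             + ereal (sig/2 * sqn (Ttheta D i) (w - ybar i)))
              (\<lambda>w. w \<in> pd_SY D i) (yplus i))"
  unfolding Lsig_partial_obj Lsig_u_obj Lsig_blk_obj by (rule is_arg_min_sgs_iff[OF yplus])

section \<open>The vector delta_theta\<close>

lemma A_adj_sum_tail: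
  assumes i: "i \<in> {1..pp}"
  shows "A_adj_sum (mixY ybar i (ybar i) yp)
     = A_adj_sum ybar + (\<Sum>k\<in>{i+1..pp}. adjoint (pd_A D k) (yp k - ybar k))"
proof -
  have "A_adj_sum (mixY ybar i (ybar i) yp) - A_adj_sum ybar
      = (\<Sum>k\<in>{1..pp}. if k \<in> {i+1..pp} then adjoint (pd_A D k) (yp k - ybar k) else 0)"
    unfolding A_adj_sum_def sum_subtractf[symmetric]
  proof (rule sum.cong)
    fix k assume k: "k \<in> {1..pp}"
    then show "adjoint (pd_A D k) (mixY ybar i (ybar i) yp k) - adjoint (pd_A D k) (ybar k)
        = (if k \<in> {i+1..pp} then adjoint (pd_A D k) (yp k - ybar k) else 0)"
      by (cases "k = i") (auto simp: mixY_def linear_diff[OF linear_A_adj])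
  qed simp
  also have "\<dots> = (\<Sum>k\<in>{1..pp} \<inter> {i+1..pp}. adjoint (pd_A D k) (yp k - ybar k))"
    by (simp only: sum.inter_restrict[OF finite_atLeastAtMost])
  also have "{1..pp} \<inter> {i+1..pp} = {i+1..pp}" using i by auto
  finally show ?thesis by (simp add: algebra_simps)
qed

text \<open>The backward recursion defining beta is the optimality condition of the backward sweep:
  each tabulated vector w_i is sigma A_i^* (yp i - ybar i).\<close>

lemma wtab_step:
  assumes i: "i \<in> {1..pp}"
  shows "Einv D i (pd_b D i - (\<Sum>k\<in>{i+1..pp}. pd_A D i (sig *\<^sub>R adjoint (pd_A D k) (yp k - ybar k)))
           - pd_A D i xbar - pd_P D i (ybar i) + sig *\<^sub>R pd_A D i (- Gam D ubar ybar vbar zbar))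
         = sig *\<^sub>R (yp i - ybar i)"
proof (rule Einv_eqI[OF i])
  let ?A = "pd_A D i" and ?At = "adjoint (pd_A D i)"
  define S where "S = (\<Sum>k\<in>{i+1..pp}. adjoint (pd_A D k) (yp k - ybar k))"
  show "sig *\<^sub>R (yp i - ybar i) \<in> pd_SY D i"
    using yp_mem[OF i] ybar_mem[OF i] block(1)[OF i] by (simp add: subspace_diff subspace_scale)
  have tail: "Gam_off i ubar ybar + ?At (ybar i) = Gam D ubar ybar vbar zbar + S"
    using Gam_mixY[OF i, of ubar ybar "ybar i"] A_adj_sum_tail[OF i]
    unfolding Gam_eq S_def by (simp add: algebra_simps)
  have "pd_E D i (sig *\<^sub>R (yp i - ybar i)) = sig *\<^sub>R (blk_rhs i ubar ybar - pd_E D i (ybar i))"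
    unfolding linear_scale[OF linear_E[OF i]] linear_diff[OF linear_E[OF i]] yp_eq_blk_min[OF i]
      E_blk_min[OF i] ..
  also have "\<dots> = pd_b D i - ?A xbar - pd_P D i (ybar i) - sig *\<^sub>R ?A (Gam_off i ubar ybar + ?At (ybar i))"
    unfolding E_decomp[OF i] blk_rhs_def using sig_pos
    by (simp add: linear_add[OF block(2)[OF i]] algebra_simps scaleR_diff_right)
  also have "\<dots> = pd_b D i - (\<Sum>k\<in>{i+1..pp}. ?A (sig *\<^sub>R adjoint (pd_A D k) (yp k - ybar k)))
      - ?A xbar - pd_P D i (ybar i) + sig *\<^sub>R ?A (- Gam D ubar ybar vbar zbar)"
    unfolding tail S_def
    by (simp add: linear_add[OF block(2)[OF i]] linear_neg[OF block(2)[OF i]] linear_sum[OF block(2)[OF i]]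
        linear_scale[OF block(2)[OF i]] scaleR_sum_right algebra_simps)
  finally show "pd_E D i (sig *\<^sub>R (yp i - ybar i)) = pd_b D i
      - (\<Sum>k\<in>{i+1..pp}. ?A (sig *\<^sub>R adjoint (pd_A D k) (yp k - ybar k)))
      - ?A xbar - pd_P D i (ybar i) + sig *\<^sub>R ?A (- Gam D ubar ybar vbar zbar)" .
qed

lemma wtab_eq:
  "n \<le> pp \<Longrightarrow> \<forall>k\<in>{pp - n + 1..pp}.
     wtab D ybar xbar (- Gam D ubar ybar vbar zbar) n k = sig *\<^sub>R adjoint (pd_A D k) (yp k - ybar k)"
proof (induction n)
  case 0
  then show ?case by auto
next
  case (Suc n)
  define i where "i = pp - n"
  have i: "i \<in> {1..pp}" using Suc.prems p_pos unfolding i_def by auto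
  have IH: "\<forall>k\<in>{i+1..pp}. wtab D ybar xbar (- Gam D ubar ybar vbar zbar) n k
      = sig *\<^sub>R adjoint (pd_A D k) (yp k - ybar k)"
    using Suc by (simp add: i_def)
  then have "(\<Sum>k\<in>{i+1..pp}. pd_A D i (wtab D ybar xbar (- Gam D ubar ybar vbar zbar) n k))
     = (\<Sum>k\<in>{i+1..pp}. pd_A D i (sig *\<^sub>R adjoint (pd_A D k) (yp k - ybar k)))"
    by (intro sum.cong) auto
  moreover have "{pp - Suc n + 1..pp} = insert i {i+1..pp}" using Suc.prems unfolding i_def by auto
  ultimately show ?case
    using IH wtab_step[OF i] by (simp add: Let_def i_def[symmetric] linear_scale[OF linear_A_adj[OF i]])
qed

lemma delta_theta_eq:
  "delta_theta D ubar ybar vbar zbar xbar = pd_F D (sig *\<^sub>R (A_adj_sum yp - A_adj_sum ybar))"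
proof -
  have "delta_theta D ubar ybar vbar zbar xbar
      = (\<Sum>k\<in>{1..pp}. pd_F D (sig *\<^sub>R adjoint (pd_A D k) (yp k - ybar k)))"
    unfolding delta_theta_def beta_def Aop_def using wtab_eq[of pp] by (intro sum.cong) auto
  also have "\<dots> = pd_F D (sig *\<^sub>R (A_adj_sum yp - A_adj_sum ybar))"
    unfolding A_adj_sum_def sum_subtractf[symmetric]
    by (simp add: linear_sum[OF linear_F] scaleR_sum_right linear_diff[OF linear_A_adj])
  finally show ?thesis .
qed

lemma Lreal_delta_theta:
  "Lreal u ybar + delta_theta D ubar ybar vbar zbar xbar \<bullet> u = Lreal u yp - (Lreal 0 yp - Lreal 0 ybar)"
proof -
  have "Gam D 0 yp vbar zbar - Gam D 0 ybar vbar zbar = A_adj_sum yp - A_adj_sum ybar"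
    unfolding Gam_eq by simp
  then have "delta_theta D ubar ybar vbar zbar xbar \<bullet> u
      = sig * (adjoint (pd_F D) u \<bullet> (Gam D 0 yp vbar zbar - Gam D 0 ybar vbar zbar))"
    unfolding delta_theta_eq linear_scale[OF linear_F]
    by (simp add: adjoint_clauses(2)[OF linear_F] inner_commute)
  then show ?thesis
    using Lreal_shift[of u yp] Lreal_shift[of u ybar] by (simp add: inner_diff_right algebra_simps)
qed

lemma is_arg_min_u_delta_iff:
  "is_arg_min (\<lambda>u. Lsig D u ybar vbar zbar xbar
       + ereal (delta_theta D ubar ybar vbar zbar xbar \<bullet> u + sig/2 * sqn (pd_Tf D) (u - ubar)))
     (\<lambda>u. True) uplus
   \<longleftrightarrow> is_arg_min (\<lambda>u. Lsig D u yp vbar zbar xbar + ereal (sig/2 * sqn (pd_Tf D) (u - ubar)))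
     (\<lambda>u. True) uplus"
proof -
  have "Lsig D u ybar vbar zbar xbar
       + ereal (delta_theta D ubar ybar vbar zbar xbar \<bullet> u + sig/2 * sqn (pd_Tf D) (u - ubar))
     = Lsig D u yp vbar zbar xbar + ereal (sig/2 * sqn (pd_Tf D) (u - ubar))
       + ereal (- (Lreal 0 yp - Lreal 0 ybar))" for u
  proof -
    have "Lreal u ybar + (delta_theta D ubar ybar vbar zbar xbar \<bullet> u + sig/2 * sqn (pd_Tf D) (u - ubar))
        = Lreal u yp + sig/2 * sqn (pd_Tf D) (u - ubar) + - (Lreal 0 yp - Lreal 0 ybar)"
      using Lreal_delta_theta[of u] by linarith
    then show ?thesis by (simp only: Lsig_eq add.assoc plus_ereal.simps(1))
  qed
  then show ?thesis by (simp add: is_arg_min_add_ereal_right)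
qed

end

lemma Lsig_g_infinity:
  assumes "wf_data D" "pd_g D v = \<infinity>"
  shows "Lsig D u ys v zs x = \<infinity>"
proof -
  have "pd_f D u \<noteq> -\<infinity>"
    using assms(1) by (simp add: wf_data_def closed_proper_convex_def proper_fun_def)
  then show ?thesis using assms(2) by (cases "pd_f D u") (simp_all add: Lsig_def)
qed

theorem proposition3p1:
  fixes D :: "('u::euclidean_space, 'v::euclidean_space, 'x::euclidean_space,
               'y::euclidean_space, 'z::euclidean_space) prob_data"
    and ubar :: 'u and ybar :: "nat \<Rightarrow> 'y" and vbar :: 'v and zbar :: "nat \<Rightarrow> 'z"
    and xbar :: 'x and yp :: "nat \<Rightarrow> 'y"
    and uplus :: 'u and yplus :: "nat \<Rightarrow> 'y"
  assumes wf: "wf_data D"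
    and ybar: "ybar \<in> PiE {1..pd_p D} (pd_SY D)"
    and zbar: "zbar \<in> PiE {1..pd_q D} (pd_SZ D)"
    and ubar_dom: "pd_f D ubar \<noteq> \<infinity>"
    and yp: "yp \<in> PiE {1..pd_p D} (pd_SY D)"
    and yp_min: "\<forall>i\<in>{1..pd_p D}.
       is_arg_min (\<lambda>w. Lsig D ubar (mixY ybar i w yp) vbar zbar xbar
                        + ereal (pd_sigma D / 2 * sqn (Ttheta D i) (w - ybar i)))
                  (\<lambda>w. w \<in> pd_SY D i) (yp i)"
    and yplus: "yplus \<in> PiE {1..pd_p D} (pd_SY D)"
  shows
   "(is_arg_min
       (\<lambda>(u, ys). Lsig D u ys vbar zbar xbar
          + ereal (pd_sigma D / 2 * ip_blk D (pd_p D) (u - ubar, (\<lambda>k. ys k - ybar k))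
                      (That D (pd_p D) (u - ubar, (\<lambda>k. ys k - ybar k)))
                 + pd_sigma D / 2 * sqn (Ttheta D (pd_p D)) (ys (pd_p D) - ybar (pd_p D))))
       (\<lambda>(u, ys). ys \<in> PiE {1..pd_p D} (pd_SY D)) (uplus, yplus)
     \<longleftrightarrow>
     is_arg_min (\<lambda>u. Lsig D u ybar vbar zbar xbar
          + ereal (delta_theta D ubar ybar vbar zbar xbar \<bullet> u
                   + pd_sigma D / 2 * sqn (pd_Tf D) (u - ubar))) (\<lambda>u. True) uplus
     \<and> (\<forall>i\<in>{1..pd_p D}.
          is_arg_min (\<lambda>w. Lsig D uplus (mixY yplus i w yp) vbar zbar xbar
                          + ereal (pd_sigma D / 2 * sqn (Ttheta D i) (w - ybar i)))
                     (\<lambda>w. w \<in> pd_SY D i) (yplus i)))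
  \<and>
   (is_arg_min
       (\<lambda>(u, ys). Lsig D u ys vbar zbar xbar
          + ereal (pd_sigma D / 2 * ip_blk D (pd_p D) (u - ubar, (\<lambda>k. ys k - ybar k))
                      (That D (pd_p D) (u - ubar, (\<lambda>k. ys k - ybar k)))
                 + pd_sigma D / 2 * sqn (Ttheta D (pd_p D)) (ys (pd_p D) - ybar (pd_p D))))
       (\<lambda>(u, ys). ys \<in> PiE {1..pd_p D} (pd_SY D)) (uplus, yplus)
     \<longleftrightarrow>
     is_arg_min (\<lambda>u. Lsig D u yp vbar zbar xbar
          + ereal (pd_sigma D / 2 * sqn (pd_Tf D) (u - ubar))) (\<lambda>u. True) uplus
     \<and> (\<forall>i\<in>{1..pd_p D}.
          is_arg_min (\<lambda>w. Lsig D uplus (mixY yplus i w yp) vbar zbar xbar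
                          + ereal (pd_sigma D / 2 * sqn (Ttheta D i) (w - ybar i)))
                     (\<lambda>w. w \<in> pd_SY D i) (yplus i)))"
proof (cases "pd_g D vbar = \<infinity>")
  case True
  then have "Lsig D u ys vbar zbar xbar + ereal r = \<infinity>" for u ys r
    using Lsig_g_infinity[OF wf] by simp
  then show ?thesis using yplus by (auto simp: is_arg_min_linorder)
next
  case False
  then interpret sgs_sweep D ubar ybar vbar zbar xbar yp
    using wf ybar yp ubar_dom yp_min by unfold_locales auto
  show ?thesis using is_arg_min_sgs_Lsig_iff[OF yplus] is_arg_min_u_delta_iff by simp
qed

end
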